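(* Let $(W_i',X_i',Y_i)'$, $i=1,2,\ldots$, be i.i.d. draws from a population $F_{W,X,Y}$, where $W$ is a $J\times 1$ vector of controls with support $\mathbb{W}$, $X$ is a $K\times1$ vector of policy variables, and $Y$ is a scalar outcome, with $\mathbb{E}[Y^2\mid W=w]<\infty$ and $\mathbb{E}[\|X\|^2\mid W=w]<\infty$ for all $w\in\mathbb{W}$. Let $e_0(w)=\mathbb{E}[X\mid W=w]$ and $v_0(w)=\mathbb{V}(X\mid W=w)$, and assume (overlap) that there is $\kappa>0$ with $t'v_0(w)t\geq\kappa$ for all $w\in\mathbb{W}$ and all column vectors $t$ with $\|t\|=1$. Define $b_0(w)=v_0(w)^{-1}\mathbb{C}(X,Y\mid W=w)$ and $\beta_0=\mathbb{E}[b_0(W)]$. Suppose each unit has a potential response function $Y(x)=A+x'B$, where $A$ is a scalar and $B$ a $K\times1$ vector of unit-specific random coefficients, and the observed outcome is $Y=Y(X)$. Suppose further (conditional exogeneity) that for all $w\in\mathbb{W}$ and all $k,l=1,\ldots,K$, $$\mathbb{C}(A,X_k\mid W=w)=\mathbb{C}(B,X_k\mid W=w)=\mathbb{C}(B,X_kX_l\mid W=w)=0.$$ Then $\beta_0=\mathbb{E}[B]$.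
   Context: $\mathbb{C}(\cdot,\cdot\mid W=w)$ denotes conditional covariance and $\mathbb{V}(\cdot\mid W=w)$ conditional variance given $W=w$. *)

theory Defs
  imports "HOL-Probability.Probability"
begin

text \<open>Conditional moments given W = w are computed w.r.t. a regular conditional
  probability (disintegration) kappa of the underlying probability space M given W.\<close>

definition is_rcp :: "'a measure \<Rightarrow> ('a \<Rightarrow> 'w::topological_space) \<Rightarrow> ('w \<Rightarrow> 'a measure) \<Rightarrow> bool" where
  "is_rcp M W \<kappa> \<longleftrightarrow>
     \<kappa> \<in> borel \<rightarrow>\<^sub>M prob_algebra M \<and>
     (\<forall>E\<in>sets M. \<forall>S\<in>sets borel.
        emeasure M (E \<inter> W -` S \<inter> space M) = (\<integral>\<^sup>+ w\<in>S. emeasure (\<kappa> w) E \<partial>distr M borel W))"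

definition support_of :: "'a measure \<Rightarrow> ('a \<Rightarrow> 'w::metric_space) \<Rightarrow> 'w set" where
  "support_of M W = {w. \<forall>e>0. measure M (W -` ball w e \<inter> space M) > 0}"

definition cexp :: "('w \<Rightarrow> 'a measure) \<Rightarrow> ('a \<Rightarrow> real) \<Rightarrow> 'w \<Rightarrow> real" where
  "cexp \<kappa> f w = integral\<^sup>L (\<kappa> w) f"

definition ccov :: "('w \<Rightarrow> 'a measure) \<Rightarrow> ('a \<Rightarrow> real) \<Rightarrow> ('a \<Rightarrow> real) \<Rightarrow> 'w \<Rightarrow> real" where
  "ccov \<kappa> f g w = cexp \<kappa> (\<lambda>\<omega>. f \<omega> * g \<omega>) w - cexp \<kappa> f w * cexp \<kappa> g w"

definition ccov_zero :: "('w \<Rightarrow> 'a measure) \<Rightarrow> ('a \<Rightarrow> real) \<Rightarrow> ('a \<Rightarrow> real) \<Rightarrow> 'w \<Rightarrow> bool" where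
  "ccov_zero \<kappa> f g w \<longleftrightarrow> integrable (\<kappa> w) f \<and> integrable (\<kappa> w) g \<and>
     integrable (\<kappa> w) (\<lambda>\<omega>. f \<omega> * g \<omega>) \<and> ccov \<kappa> f g w = 0"

definition v0 :: "('w \<Rightarrow> 'a measure) \<Rightarrow> ('a \<Rightarrow> real^'k) \<Rightarrow> 'w \<Rightarrow> real^'k^'k" where
  "v0 \<kappa> X w = (\<chi> i j. ccov \<kappa> (\<lambda>\<omega>. X \<omega> $ i) (\<lambda>\<omega>. X \<omega> $ j) w)"

definition b0 :: "('w \<Rightarrow> 'a measure) \<Rightarrow> ('a \<Rightarrow> real^'k) \<Rightarrow> ('a \<Rightarrow> real) \<Rightarrow> 'w \<Rightarrow> real^'k" where
  "b0 \<kappa> X Y w = matrix_inv (v0 \<kappa> X w) *v (\<chi> k. ccov \<kappa> (\<lambda>\<omega>. X \<omega> $ k) Y w)"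

end

(* Under conditional exogeneity the coefficients A and B are conditionally uncorrelated with X
   and with the products X_k X_l, so expanding Y = A + X'B gives C(X, Y | W = w) = v_0(w) E[B | W = w].
   Overlap makes v_0(w) invertible, hence b_0(w) = E[B | W = w] for every w in the support of W,
   which carries all the mass of W. Since the conditional moments are integrals against a
   disintegration of M along W, the law of iterated expectations gives E[b_0(W)] = E[B]. *)

theory Submission
  imports Defs
begin

lemma borel_measurable_vecI:
  fixes f :: "'a \<Rightarrow> 'b::euclidean_space ^ 'n"
  assumes "\<And>i. (\<lambda>x. f x $ i) \<in> borel_measurable M"
  shows "f \<in> borel_measurable M"
  unfolding borel_measurable_euclidean_space[of f]
  using assms by (auto simp: Basis_vec_def inner_axis)

lemma borel_measurable_vec_nth[measurable]:
  "(\<lambda>x::'b::euclidean_space ^ 'n. x $ i) \<in> borel_measurable borel"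
  by (intro borel_measurable_continuous_onI linear_continuous_on bounded_linear_vec_nth)

lemma borel_measurable_matrix_vector_mult[measurable]:
  fixes F :: "'a \<Rightarrow> real^'n^'m" and G :: "'a \<Rightarrow> real^'n"
  assumes [measurable]: "F \<in> borel_measurable M" "G \<in> borel_measurable M"
  shows "(\<lambda>x. F x *v G x) \<in> borel_measurable M"
  by (intro borel_measurable_vecI) (simp add: matrix_vector_mult_def)

lemma borel_measurable_det[measurable]:
  fixes f :: "'a \<Rightarrow> real^'n^'n"
  assumes [measurable]: "f \<in> borel_measurable M"
  shows "(\<lambda>x. det (f x)) \<in> borel_measurable M"
  unfolding det_def by measurable

lemma integrable_vecI:
  fixes f :: "'a \<Rightarrow> real ^ 'n"
  assumes "\<And>i. integrable M (\<lambda>x. f x $ i)"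
  shows "integrable M f"
proof -
  have eq: "f = (\<lambda>x. \<Sum>i\<in>UNIV. f x $ i *\<^sub>R axis i 1)"
    by (rule ext) (simp add: vec_eq_iff axis_def if_distrib cong: if_cong)
  show ?thesis
    by (subst eq) (auto intro!: integrable_sum integrable_scaleR_left assms)
qed

lemma integral_vec_nth:
  fixes f :: "'a \<Rightarrow> real ^ 'n"
  assumes "integrable M f"
  shows "integral\<^sup>L M f $ i = (\<integral>x. f x $ i \<partial>M)"
  using integral_inner_left[of "axis i 1" M f] assms by (simp add: inner_axis)

lemma matrix_inv_left:
  fixes V :: "'a::semiring_1^'n^'m"
  assumes "invertible V"
  shows "matrix_inv V ** V = mat 1"
  using assms unfolding invertible_def matrix_inv_def
  by (rule someI_ex[where P = "\<lambda>V'. V ** V' = mat 1 \<and> V' ** V = mat 1", THEN conjunct2])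

lemma matrix_inv_right:
  fixes V :: "'a::semiring_1^'n^'m"
  assumes "invertible V"
  shows "V ** matrix_inv V = mat 1"
  using assms unfolding invertible_def matrix_inv_def
  by (rule someI_ex[where P = "\<lambda>V'. V ** V' = mat 1 \<and> V' ** V = mat 1", THEN conjunct1])

lemma matrix_inv_singular:
  fixes U V :: "'a::semiring_1^'n^'m"
  assumes "\<not> invertible U" "\<not> invertible V"
  shows "matrix_inv U = matrix_inv V"
proof -
  have "(\<lambda>U'. U ** U' = mat 1 \<and> U' ** U = mat 1) = (\<lambda>V'. V ** V' = mat 1 \<and> V' ** V = mat 1)"
    using assms unfolding invertible_def by auto
  then show ?thesis
    unfolding matrix_inv_def by simp
qed

lemma matrix_inv_cramer:
  fixes V :: "real^'n^'n"
  assumes "det V \<noteq> 0"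
  shows "matrix_inv V $ i $ j = det (\<chi> a b. if b = i then axis j 1 $ a else V $ a $ b) / det V"
proof -
  have "V *v (matrix_inv V *v axis j 1) = axis j 1"
    using assms by (simp add: matrix_vector_mul_assoc matrix_inv_right invertible_det_nz)
  then have "matrix_inv V *v axis j 1 = (\<chi> k. det (\<chi> a b. if b = k then axis j 1 $ a else V $ a $ b) / det V)"
    using cramer[OF assms] by blast
  moreover have "(matrix_inv V *v axis j 1) $ i = matrix_inv V $ i $ j"
    by (simp add: matrix_vector_mult_def axis_def if_distrib cong: if_cong)
  ultimately show ?thesis
    by simp
qed

(* Off the invertible matrices, matrix_inv is the junk value matrix_inv 0 (SOME of an
   unsatisfiable predicate); on them it is given by Cramer's rule. *)
lemma borel_measurable_matrix_inv[measurable]: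
  "(matrix_inv :: real^'n^'n \<Rightarrow> real^'n^'n) \<in> borel_measurable borel"
proof -
  have singular_0: "\<not> invertible (0 :: real^'n^'n)"
    unfolding invertible_def by (auto simp: vec_eq_iff mat_def)
  define C :: "'n \<Rightarrow> 'n \<Rightarrow> real^'n^'n \<Rightarrow> real^'n^'n"
    where "C i j V = (\<chi> a b. if b = i then axis j 1 $ a else V $ a $ b)" for i j V
  have eq: "matrix_inv = (\<lambda>V. if det V = 0 then matrix_inv 0 else \<chi> i j. det (C i j V) / det V)"
    using matrix_inv_singular[OF _ singular_0]
    by (intro ext) (simp add: invertible_det_nz vec_eq_iff matrix_inv_cramer C_def)
  have [measurable]: "C i j \<in> borel_measurable borel" for i j
    unfolding C_def by (intro borel_measurable_vecI) simp
  have [measurable]: "(\<lambda>V. \<chi> i j. det (C i j V) / det V) \<in> borel_measurable borel"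
    by (intro borel_measurable_vecI) simp
  show ?thesis
    by (subst eq) measurable
qed

lemma invertible_if_coercive:
  fixes V :: "real^'n^'n"
  assumes "c > 0" and "\<And>t. norm t = 1 \<Longrightarrow> t \<bullet> (V *v t) \<ge> c"
  shows "invertible V"
  unfolding invertible_left_inverse matrix_left_invertible_ker
proof (intro allI impI, rule ccontr)
  fix x assume "V *v x = 0" and "x \<noteq> 0"
  then have "norm (x /\<^sub>R norm x) = 1" and "V *v (x /\<^sub>R norm x) = 0"
    by (simp_all add: matrix_vector_mult_scaleR)
  then show False
    using assms(1) assms(2)[of "x /\<^sub>R norm x"] by simp
qed

lemma integral_bind_kernel_nonneg:
  fixes f :: "'a \<Rightarrow> real"
  assumes K: "K \<in> N \<rightarrow>\<^sub>M subprob_algebra M" and M: "M = N \<bind> K"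
    and f[measurable]: "f \<in> borel_measurable M" and nonneg: "\<And>x. x \<in> space M \<Longrightarrow> 0 \<le> f x"
    and int: "integrable M f"
  shows "AE w in N. integrable (K w) f"
    and "integrable N (\<lambda>w. integral\<^sup>L (K w) f)"
    and "(\<integral>w. integral\<^sup>L (K w) f \<partial>N) = integral\<^sup>L M f"
proof -
  have sets_K: "sets (K w) = sets M" if "w \<in> space N" for w
    using measurable_space[OF K that] by (simp add: space_subprob_algebra)
  have space_K: "space (K w) = space M" if "w \<in> space N" for w
    using sets_eq_imp_space_eq[OF sets_K[OF that]] .
  have f_K: "f \<in> borel_measurable (K w)" if "w \<in> space N" for w
    using f sets_K[OF that] by (simp cong: measurable_cong_sets)
  have "(\<integral>\<^sup>+w. \<integral>\<^sup>+y. f y \<partial>K w \<partial>N) = (\<integral>\<^sup>+x. f x \<partial>M)"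
    by (subst M, rule nn_integral_bind[OF _ K, symmetric]) simp
  also have "\<dots> = ennreal (integral\<^sup>L M f)"
    using nn_integral_eq_integral[OF int] nonneg by auto
  finally have nn_bind: "(\<integral>\<^sup>+w. \<integral>\<^sup>+y. f y \<partial>K w \<partial>N) = ennreal (integral\<^sup>L M f)" .
  have "(\<lambda>w. \<integral>\<^sup>+y. f y \<partial>K w) \<in> borel_measurable N"
    using measurable_compose[OF K nn_integral_measurable_subprob_algebra[of "\<lambda>y. ennreal (f y)"]] by simp
  from nn_integral_PInf_AE[OF this] have "AE w in N. (\<integral>\<^sup>+y. f y \<partial>K w) \<noteq> \<infinity>"
    using nn_bind by simp
  then have AE_K: "AE w in N. integrable (K w) f \<and> (\<integral>\<^sup>+y. f y \<partial>K w) = ennreal (integral\<^sup>L (K w) f)"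
  proof (rule AE_mp, intro AE_I2 impI)
    fix w assume w: "w \<in> space N" and finite: "(\<integral>\<^sup>+y. f y \<partial>K w) \<noteq> \<infinity>"
    have "AE y in K w. 0 \<le> f y"
      using nonneg space_K[OF w] by auto
    moreover from this have "integrable (K w) f"
      using integrableI_nonneg[OF f_K[OF w]] finite by (simp add: top.not_eq_extremum)
    ultimately show "integrable (K w) f \<and> (\<integral>\<^sup>+y. f y \<partial>K w) = ennreal (integral\<^sup>L (K w) f)"
      using nn_integral_eq_integral by blast
  qed
  then show "AE w in N. integrable (K w) f"
    by auto
  have "(\<integral>\<^sup>+w. ennreal (integral\<^sup>L (K w) f) \<partial>N) = ennreal (integral\<^sup>L M f)"
    unfolding nn_bind[symmetric] using AE_K by (intro nn_integral_cong_AE) auto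
  moreover have "AE w in N. 0 \<le> integral\<^sup>L (K w) f"
    using nonneg space_K by (intro AE_I2 integral_nonneg_AE) auto
  moreover have "(\<lambda>w. integral\<^sup>L (K w) f) \<in> borel_measurable N"
    using measurable_compose[OF K integral_measurable_subprob_algebra[OF f]] .
  moreover have "0 \<le> integral\<^sup>L M f"
    using nonneg by simp
  ultimately have "integrable N (\<lambda>w. integral\<^sup>L (K w) f) \<and> (\<integral>w. integral\<^sup>L (K w) f \<partial>N) = integral\<^sup>L M f"
    using nn_integral_eq_integrable by metis
  then show "integrable N (\<lambda>w. integral\<^sup>L (K w) f)"
    and "(\<integral>w. integral\<^sup>L (K w) f \<partial>N) = integral\<^sup>L M f"
    by auto
qed

lemma
  fixes f :: "'a \<Rightarrow> real"
  assumes K: "K \<in> N \<rightarrow>\<^sub>M subprob_algebra M" and M: "M = N \<bind> K"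
    and f[measurable]: "f \<in> borel_measurable M" and int: "integrable M f"
  shows integrable_integral_bind_kernel: "integrable N (\<lambda>w. integral\<^sup>L (K w) f)"
    and integral_bind_kernel: "(\<integral>w. integral\<^sup>L (K w) f \<partial>N) = integral\<^sup>L M f"
proof -
  define f_plus where "f_plus x = max (f x) 0" for x
  define f_minus where "f_minus x = max (- f x) 0" for x
  have [measurable]: "f_plus \<in> borel_measurable M" "f_minus \<in> borel_measurable M"
    unfolding f_plus_def f_minus_def by measurable
  have int_pm: "integrable M f_plus" "integrable M f_minus"
    unfolding f_plus_def f_minus_def using int by auto
  have f_eq: "f = (\<lambda>x. f_plus x - f_minus x)"
    unfolding f_plus_def f_minus_def by auto
  note pos = integral_bind_kernel_nonneg[OF K M _ _ int_pm(1)]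
    and neg = integral_bind_kernel_nonneg[OF K M _ _ int_pm(2)]
  have "AE w in N. integrable (K w) f_plus" "AE w in N. integrable (K w) f_minus"
    by (rule pos neg; simp add: f_plus_def f_minus_def)+
  then have AE_split: "AE w in N. integral\<^sup>L (K w) f = integral\<^sup>L (K w) f_plus - integral\<^sup>L (K w) f_minus"
    by eventually_elim (simp add: f_eq)
  have int_N: "integrable N (\<lambda>w. integral\<^sup>L (K w) f_plus)" "integrable N (\<lambda>w. integral\<^sup>L (K w) f_minus)"
    by (rule pos neg; simp add: f_plus_def f_minus_def)+
  have meas: "(\<lambda>w. integral\<^sup>L (K w) f) \<in> borel_measurable N"
    using measurable_compose[OF K integral_measurable_subprob_algebra[OF f]] .
  show "integrable N (\<lambda>w. integral\<^sup>L (K w) f)"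
    by (rule integrable_cong_AE_imp[OF Bochner_Integration.integrable_diff[OF int_N] meas])
      (use AE_split in auto)
  have "(\<integral>w. integral\<^sup>L (K w) f \<partial>N) = (\<integral>w. integral\<^sup>L (K w) f_plus - integral\<^sup>L (K w) f_minus \<partial>N)"
    using AE_split meas int_N by (intro integral_cong_AE) auto
  also have "\<dots> = integral\<^sup>L M f_plus - integral\<^sup>L M f_minus"
    using int_N pos(3) neg(3) by (simp add: f_plus_def f_minus_def)
  also have "\<dots> = integral\<^sup>L M f"
    using int_pm by (simp add: f_eq)
  finally show "(\<integral>w. integral\<^sup>L (K w) f \<partial>N) = integral\<^sup>L M f" .
qed

lemma is_rcp_kernel: "is_rcp M W \<kappa> \<Longrightarrow> \<kappa> \<in> borel \<rightarrow>\<^sub>M subprob_algebra M"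
  unfolding is_rcp_def using measurable_prob_algebraD by blast

lemma bind_rcp:
  assumes rcp: "is_rcp M W \<kappa>"
  shows "M = distr M borel W \<bind> \<kappa>"
proof (rule measure_eqI)
  have \<kappa>: "\<kappa> \<in> distr M borel W \<rightarrow>\<^sub>M subprob_algebra M"
    using is_rcp_kernel[OF rcp] by (simp add: measurable_cong_sets[OF sets_distr refl])
  then show "sets M = sets (distr M borel W \<bind> \<kappa>)"
    by (simp add: sets_bind_measurable)
  fix E assume E: "E \<in> sets M"
  then have "emeasure M E = emeasure M (E \<inter> W -` UNIV \<inter> space M)"
    using sets.sets_into_space by (simp add: Int_absorb2)
  also have "\<dots> = (\<integral>\<^sup>+w\<in>UNIV. emeasure (\<kappa> w) E \<partial>distr M borel W)"
    using rcp E sets.top[of borel] unfolding is_rcp_def space_borel by blast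
  also have "\<dots> = emeasure (distr M borel W \<bind> \<kappa>) E"
    by (simp add: emeasure_bind[OF _ \<kappa> E])
  finally show "emeasure M E = emeasure (distr M borel W \<bind> \<kappa>) E" .
qed

lemma borel_measurable_cexp:
  assumes "\<kappa> \<in> N \<rightarrow>\<^sub>M subprob_algebra M" and "f \<in> borel_measurable M"
  shows "cexp \<kappa> f \<in> borel_measurable N"
  unfolding cexp_def using measurable_compose[OF assms(1) integral_measurable_subprob_algebra[OF assms(2)]] .

lemma
  assumes rcp: "is_rcp M W \<kappa>" and [measurable]: "W \<in> borel_measurable M"
    and f: "f \<in> borel_measurable M" and int: "integrable M f"
  shows integrable_cexp_comp: "integrable M (\<lambda>\<omega>. cexp \<kappa> f (W \<omega>))"
    and integral_cexp_comp: "(\<integral>\<omega>. cexp \<kappa> f (W \<omega>) \<partial>M) = integral\<^sup>L M f"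
proof -
  have \<kappa>: "\<kappa> \<in> distr M borel W \<rightarrow>\<^sub>M subprob_algebra M"
    using is_rcp_kernel[OF rcp] by (simp add: measurable_cong_sets[OF sets_distr refl])
  have [measurable]: "(\<lambda>w. integral\<^sup>L (\<kappa> w) f) \<in> borel_measurable borel"
    using borel_measurable_cexp[OF is_rcp_kernel[OF rcp] f] by (simp add: cexp_def[abs_def])
  note bind = bind_rcp[OF rcp]
  show "integrable M (\<lambda>\<omega>. cexp \<kappa> f (W \<omega>))"
    using integrable_integral_bind_kernel[OF \<kappa> bind f int]
    by (simp add: cexp_def integrable_distr_eq)
  show "(\<integral>\<omega>. cexp \<kappa> f (W \<omega>) \<partial>M) = integral\<^sup>L M f"
    using integral_bind_kernel[OF \<kappa> bind f int]
    by (simp add: cexp_def integral_distr)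
qed

lemma integral_cexp_vec_comp:
  fixes B :: "'a \<Rightarrow> real^'n"
  assumes rcp: "is_rcp M W \<kappa>" and "W \<in> borel_measurable M"
    and "B \<in> borel_measurable M" and "integrable M B"
  shows "(\<integral>\<omega>. (\<chi> m. cexp \<kappa> (\<lambda>\<omega>. B \<omega> $ m) (W \<omega>)) \<partial>M) = integral\<^sup>L M B"
proof -
  have "(\<lambda>\<omega>. B \<omega> $ m) \<in> borel_measurable M" and "integrable M (\<lambda>\<omega>. B \<omega> $ m)" for m
    using assms(3,4) by (simp_all add: cart_eq_inner_axis)
  then have "integrable M (\<lambda>\<omega>. cexp \<kappa> (\<lambda>\<omega>. B \<omega> $ m) (W \<omega>))"
    and "(\<integral>\<omega>. cexp \<kappa> (\<lambda>\<omega>. B \<omega> $ m) (W \<omega>) \<partial>M) = (\<integral>\<omega>. B \<omega> $ m \<partial>M)" for m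
    by (simp_all add: integrable_cexp_comp[OF rcp assms(2)] integral_cexp_comp[OF rcp assms(2)])
  then show ?thesis
    by (simp add: vec_eq_iff integral_vec_nth integrable_vecI assms(4))
qed

lemma borel_measurable_ccov:
  assumes \<kappa>: "\<kappa> \<in> N \<rightarrow>\<^sub>M subprob_algebra M"
    and f: "f \<in> borel_measurable M" and g: "g \<in> borel_measurable M"
  shows "ccov \<kappa> f g \<in> borel_measurable N"
proof -
  have "(\<lambda>\<omega>. f \<omega> * g \<omega>) \<in> borel_measurable M"
    using f g by simp
  then show ?thesis
    unfolding ccov_def using borel_measurable_cexp[OF \<kappa>] f g
    by (intro borel_measurable_diff borel_measurable_times) auto
qed

lemma borel_measurable_b0:
  fixes X :: "'a \<Rightarrow> real^'k" and Y :: "'a \<Rightarrow> real"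
  assumes \<kappa>: "\<kappa> \<in> N \<rightarrow>\<^sub>M subprob_algebra M"
    and [measurable]: "X \<in> borel_measurable M" "Y \<in> borel_measurable M"
  shows "b0 \<kappa> X Y \<in> borel_measurable N"
proof -
  have "v0 \<kappa> X \<in> borel_measurable N"
    unfolding v0_def by (intro borel_measurable_vecI) (simp, rule borel_measurable_ccov[OF \<kappa>]; measurable)
  moreover have "(\<lambda>w. \<chi> k. ccov \<kappa> (\<lambda>\<omega>. X \<omega> $ k) Y w) \<in> borel_measurable N"
    by (intro borel_measurable_vecI) (simp, rule borel_measurable_ccov[OF \<kappa>]; measurable)
  ultimately show ?thesis
    unfolding b0_def
    by (intro borel_measurable_matrix_vector_mult measurable_compose[OF _ borel_measurable_matrix_inv])
qed

lemma AE_support_of: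
  fixes W :: "'a \<Rightarrow> 'w::{metric_space, second_countable_topology}"
  assumes "finite_measure M" and W: "W \<in> borel_measurable M"
  shows "AE \<omega> in M. W \<omega> \<in> support_of M W"
proof -
  interpret finite_measure M by fact
  \<comment> \<open>Outside the support, W lies in a W-null basic open set, and there are only countably many.\<close>
  obtain \<B> :: "'w set set" where "countable \<B>" and basis: "topological_basis \<B>"
    using ex_countable_basis by blast
  define \<N> where "\<N> = {b\<in>\<B>. W -` b \<inter> space M \<in> null_sets M}"
  have "(\<Union>b\<in>\<N>. W -` b \<inter> space M) \<in> null_sets M"
    using \<open>countable \<B>\<close> by (intro null_sets_UN') (auto simp: \<N>_def)
  then show ?thesis
  proof (rule AE_I', safe)
    fix \<omega> assume \<omega>: "\<omega> \<in> space M" and "W \<omega> \<notin> support_of M W"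
    then obtain e where "e > 0" and "\<not> measure M (W -` ball (W \<omega>) e \<inter> space M) > 0"
      unfolding support_of_def by auto
    then have "measure M (W -` ball (W \<omega>) e \<inter> space M) = 0"
      using measure_nonneg[of M "W -` ball (W \<omega>) e \<inter> space M"] by linarith
    then have null_ball: "W -` ball (W \<omega>) e \<inter> space M \<in> null_sets M"
      using measurable_sets[OF W] by (simp add: emeasure_eq_measure null_sets_def)
    obtain b where b: "b \<in> \<B>" "W \<omega> \<in> b" "b \<subseteq> ball (W \<omega>) e"
      using topological_basisE[OF basis, of "ball (W \<omega>) e" "W \<omega>"] \<open>e > 0\<close> by auto
    have "W -` b \<inter> space M \<in> null_sets M"
      using measurable_sets[OF W borel_open[OF topological_basis_open[OF basis b(1)]]] b(3)
      by (intro null_sets_subset[OF null_ball]) auto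
    then show "\<omega> \<in> (\<Union>b\<in>\<N>. W -` b \<inter> space M)"
      using \<omega> b unfolding \<N>_def by auto
  qed
qed

lemma ccov_linear_outcome:
  fixes X B :: "'a \<Rightarrow> real^'k" and A Y :: "'a \<Rightarrow> real"
  assumes outcome: "\<And>\<omega>. Y \<omega> = A \<omega> + X \<omega> \<bullet> B \<omega>"
    and exoA: "\<And>k. ccov_zero \<kappa> A (\<lambda>\<omega>. X \<omega> $ k) w"
    and exoB1: "\<And>m k. ccov_zero \<kappa> (\<lambda>\<omega>. B \<omega> $ m) (\<lambda>\<omega>. X \<omega> $ k) w"
    and exoB2: "\<And>m k l. ccov_zero \<kappa> (\<lambda>\<omega>. B \<omega> $ m) (\<lambda>\<omega>. X \<omega> $ k * X \<omega> $ l) w"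
  shows "(\<chi> k. ccov \<kappa> (\<lambda>\<omega>. X \<omega> $ k) Y w) = v0 \<kappa> X w *v (\<chi> l. cexp \<kappa> (\<lambda>\<omega>. B \<omega> $ l) w)"
proof -
  let ?E = "\<lambda>f. cexp \<kappa> f w"
  have factor: "integrable (\<kappa> w) (\<lambda>\<omega>. f \<omega> * g \<omega>) \<and> ?E (\<lambda>\<omega>. f \<omega> * g \<omega>) = ?E f * ?E g"
    if "ccov_zero \<kappa> f g w" for f g
    using that unfolding ccov_zero_def ccov_def by simp
  have "ccov \<kappa> (\<lambda>\<omega>. X \<omega> $ k) Y w = (\<Sum>l\<in>UNIV. v0 \<kappa> X w $ k $ l * ?E (\<lambda>\<omega>. B \<omega> $ l))" for k
  proof -
    have "(\<lambda>\<omega>. X \<omega> $ k * Y \<omega>) = (\<lambda>\<omega>. A \<omega> * X \<omega> $ k + (\<Sum>l\<in>UNIV. B \<omega> $ l * (X \<omega> $ k * X \<omega> $ l)))"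
      by (auto simp: outcome inner_vec_def sum_distrib_left algebra_simps intro!: sum.cong)
    then have E_XY: "?E (\<lambda>\<omega>. X \<omega> $ k * Y \<omega>) =
        ?E A * ?E (\<lambda>\<omega>. X \<omega> $ k) + (\<Sum>l\<in>UNIV. ?E (\<lambda>\<omega>. B \<omega> $ l) * ?E (\<lambda>\<omega>. X \<omega> $ k * X \<omega> $ l))"
      using factor[OF exoA] factor[OF exoB2]
      by (simp add: cexp_def integral_add integral_sum integrable_sum)
    have "Y = (\<lambda>\<omega>. A \<omega> + (\<Sum>l\<in>UNIV. B \<omega> $ l * X \<omega> $ l))"
      by (auto simp: outcome inner_vec_def algebra_simps)
    then have E_Y: "?E Y = ?E A + (\<Sum>l\<in>UNIV. ?E (\<lambda>\<omega>. B \<omega> $ l) * ?E (\<lambda>\<omega>. X \<omega> $ l))"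
      using exoA[of k] factor[OF exoB1]
      by (simp add: ccov_zero_def cexp_def integral_add integral_sum integrable_sum)
    show ?thesis
      unfolding ccov_def E_XY E_Y v0_def
      by (simp add: algebra_simps sum_distrib_left sum_subtractf)
  qed
  then show ?thesis
    by (simp add: vec_eq_iff matrix_vector_mult_def)
qed

lemma b0_eqI:
  assumes "invertible (v0 \<kappa> X w)"
    and "(\<chi> k. ccov \<kappa> (\<lambda>\<omega>. X \<omega> $ k) Y w) = v0 \<kappa> X w *v \<beta>"
  shows "b0 \<kappa> X Y w = \<beta>"
  unfolding b0_def assms(2)
  by (simp add: matrix_vector_mul_assoc matrix_inv_left[OF assms(1)])

theorem proposition1:
  fixes M :: "'a measure"
    and W :: "'a \<Rightarrow> real^'j"
    and X B :: "'a \<Rightarrow> real^'k"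
    and A Y :: "'a \<Rightarrow> real"
    and \<kappa> :: "real^'j \<Rightarrow> 'a measure"
    and c :: real
  assumes "prob_space M"
    and "W \<in> borel_measurable M" and "X \<in> borel_measurable M" and "B \<in> borel_measurable M"
    and "A \<in> borel_measurable M"
    and rcp: "is_rcp M W \<kappa>"
    and outcome: "\<And>\<omega>. Y \<omega> = A \<omega> + X \<omega> \<bullet> B \<omega>"
    and momY: "\<And>w. w \<in> support_of M W \<Longrightarrow> integrable (\<kappa> w) (\<lambda>\<omega>. (Y \<omega>)\<^sup>2)"
    and momX: "\<And>w. w \<in> support_of M W \<Longrightarrow> integrable (\<kappa> w) (\<lambda>\<omega>. (norm (X \<omega>))\<^sup>2)"
    and overlap_pos: "c > 0"
    and overlap: "\<And>w t. w \<in> support_of M W \<Longrightarrow> norm t = 1 \<Longrightarrow> t \<bullet> (v0 \<kappa> X w *v t) \<ge> c"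
    and exoA: "\<And>w k. w \<in> support_of M W \<Longrightarrow> ccov_zero \<kappa> A (\<lambda>\<omega>. X \<omega> $ k) w"
    and exoB1: "\<And>w m k. w \<in> support_of M W \<Longrightarrow> ccov_zero \<kappa> (\<lambda>\<omega>. B \<omega> $ m) (\<lambda>\<omega>. X \<omega> $ k) w"
    and exoB2: "\<And>w m k l. w \<in> support_of M W \<Longrightarrow>
                   ccov_zero \<kappa> (\<lambda>\<omega>. B \<omega> $ m) (\<lambda>\<omega>. X \<omega> $ k * X \<omega> $ l) w"
    and intB: "integrable M B"
  shows "integral\<^sup>L M (\<lambda>\<omega>. b0 \<kappa> X Y (W \<omega>)) = integral\<^sup>L M B"
proof -
  interpret prob_space M by fact
  note [measurable] = \<open>W \<in> borel_measurable M\<close> \<open>X \<in> borel_measurable M\<close>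
    \<open>B \<in> borel_measurable M\<close> \<open>A \<in> borel_measurable M\<close>
  have "Y = (\<lambda>\<omega>. A \<omega> + X \<omega> \<bullet> B \<omega>)"
    using outcome by auto
  then have [measurable]: "Y \<in> borel_measurable M"
    by simp
  have \<kappa>: "\<kappa> \<in> borel \<rightarrow>\<^sub>M subprob_algebra M"
    by (rule is_rcp_kernel[OF rcp])
  define \<beta> where "\<beta> w = (\<chi> m. cexp \<kappa> (\<lambda>\<omega>. B \<omega> $ m) w)" for w
  have [measurable]: "\<beta> \<in> borel_measurable borel"
    unfolding \<beta>_def by (intro borel_measurable_vecI) (simp add: borel_measurable_cexp[OF \<kappa>])
  have [measurable]: "b0 \<kappa> X Y \<in> borel_measurable borel"
    by (rule borel_measurable_b0[OF \<kappa>]) measurable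
  have b0_on_support: "b0 \<kappa> X Y w = \<beta> w" if w: "w \<in> support_of M W" for w
    using invertible_if_coercive[OF overlap_pos overlap[OF w]]
      ccov_linear_outcome[OF outcome exoA[OF w] exoB1[OF w] exoB2[OF w]]
    unfolding \<beta>_def by (rule b0_eqI)
  have "AE \<omega> in M. b0 \<kappa> X Y (W \<omega>) = \<beta> (W \<omega>)"
    using AE_support_of[OF finite_measure_axioms \<open>W \<in> borel_measurable M\<close>]
    by (rule eventually_mono) (rule b0_on_support)
  then have "integral\<^sup>L M (\<lambda>\<omega>. b0 \<kappa> X Y (W \<omega>)) = integral\<^sup>L M (\<lambda>\<omega>. \<beta> (W \<omega>))"
    by (intro integral_cong_AE) auto
  also have "\<dots> = integral\<^sup>L M B"
    unfolding \<beta>_def by (rule integral_cexp_vec_comp[OF rcp]) (use intB in simp_all)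
  finally show ?thesis .
qed

end
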